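(* Let $X\in\mathbb{R}^{n\times p}$ have unit $\ell_2$-norm columns and worst-case coherence $\mu>0$, let $\beta\in\mathbb{R}^p$ be $k$-sparse with support $\mathcal{S}$, let $\eta\in\mathbb{R}^n$ have independent $\mathcal{N}(0,\sigma^2)$ entries, and $y=X\beta+\eta$. Suppose $k<\mu^{-1}$ and $$\frac{\beta_{\min}}{\|\beta\|_2}>2\mu\sqrt{k}+\frac{4\sqrt{\sigma^2\log p}}{\|\beta\|_2}.$$ Then, with probability exceeding $1-2\big(p\sqrt{2\pi\log p}\big)^{-1}$, the output $\hat{\mathcal{S}}$ of Algorithm 1 satisfies $\mathcal{S}\subset\hat{\mathcal{S}}$ for every integer $d\le p$ with $$d\ge\left\lceil\frac{\sqrt{k}}{\frac{\beta_{\min}}{\|\beta\|_2}-2\mu\sqrt{k}-\frac{4\sqrt{\sigma^2\log p}}{\|\beta\|_2}}\right\rceil.$$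
   Context: Worst-case coherence of $X$ with unit-norm columns $X_1,\dots,X_p$: $\mu=\max_{i\ne j}|X_i^\top X_j|$. $[[p]]=\{1,\dots,p\}$, $p\ge2$, $k<n$, $\sigma>0$. $\beta$ (deterministic) is $k$-sparse with support $\mathcal{S}=\{i:\beta_i\ne0\}$, $|\mathcal{S}|=k$; $\beta_{\min}=\min_{i\in\mathcal{S}}|\beta_i|$. Algorithm 1: given $X$, $y$ and an integer $d\in\{1,\dots,p\}$, compute $w=X^\top y$ and output $\hat{\mathcal{S}}\subset[[p]]$ with $|\hat{\mathcal{S}}|=d$ such that $|w_i|\ge|w_j|$ for all $i\in\hat{\mathcal{S}}$, $j\notin\hat{\mathcal{S}}$ (ties broken arbitrarily). *)

theory Defs
  imports "HOL-Probability.Probability"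
begin

text \<open>Matrices X in R^{n x p} are represented as X :: nat => nat => real with entry X i j
  for row i < n and column j < p (columns indexed 0..p-1 instead of 1..p).
  Vectors in R^n / R^p are functions nat => real used on {..<n} / {..<p}.\<close>

definition col_inner :: "nat \<Rightarrow> (nat \<Rightarrow> nat \<Rightarrow> real) \<Rightarrow> nat \<Rightarrow> nat \<Rightarrow> real" where
  "col_inner n X a b = (\<Sum>i<n. X i a * X i b)"

definition coherence :: "nat \<Rightarrow> nat \<Rightarrow> (nat \<Rightarrow> nat \<Rightarrow> real) \<Rightarrow> real" where
  "coherence n p X = Max {\<bar>col_inner n X a b\<bar> | a b. a < p \<and> b < p \<and> a \<noteq> b}"

definition matvec :: "nat \<Rightarrow> (nat \<Rightarrow> nat \<Rightarrow> real) \<Rightarrow> (nat \<Rightarrow> real) \<Rightarrow> nat \<Rightarrow> real" where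
  "matvec p X b i = (\<Sum>j<p. X i j * b j)"

definition tmatvec :: "nat \<Rightarrow> (nat \<Rightarrow> nat \<Rightarrow> real) \<Rightarrow> (nat \<Rightarrow> real) \<Rightarrow> nat \<Rightarrow> real" where
  "tmatvec n X y j = (\<Sum>i<n. X i j * y i)"

text \<open>Algorithm 1: Shat is a valid output (for some tie-breaking) given X, y and d.\<close>
definition alg1_output :: "nat \<Rightarrow> nat \<Rightarrow> (nat \<Rightarrow> nat \<Rightarrow> real) \<Rightarrow> (nat \<Rightarrow> real) \<Rightarrow> nat \<Rightarrow> nat set \<Rightarrow> bool" where
  "alg1_output n p X y d Shat \<longleftrightarrow>
     (let w = tmatvec n X y in
       Shat \<subseteq> {..<p} \<and> card Shat = d \<and>
       (\<forall>i\<in>Shat. \<forall>j\<in>{..<p} - Shat. \<bar>w i\<bar> \<ge> \<bar>w j\<bar>))"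

definition gauss_noise :: "nat \<Rightarrow> real \<Rightarrow> (nat \<Rightarrow> real) measure" where
  "gauss_noise n \<sigma> = PiM {..<n} (\<lambda>_. density lborel (normal_density 0 \<sigma>))"

definition l2norm :: "nat \<Rightarrow> (nat \<Rightarrow> real) \<Rightarrow> real" where
  "l2norm p b = sqrt (\<Sum>j<p. (b j)\<^sup>2)"

end

theory Submission
  imports Defs "HOL-Real_Asymp.Real_Asymp"
begin

text \<open>Write \<open>w = X\<^sup>T y = X\<^sup>T X \<beta> + X\<^sup>T \<eta>\<close>. Each noise correlation \<open>X\<^sub>j\<^sup>T \<eta>\<close> is
  \<open>N(0, \<sigma>\<^sup>2)\<close> because the columns have unit norm, so by the Gaussian tail bound and a union
  bound all \<open>p\<close> of them stay below \<open>\<tau> = 2\<sigma>\<surd>(log p)\<close> with probability at least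
  \<open>1 - (p \<surd>(2\<pi> log p))\<^sup>-\<^sup>1\<close>. On that event coherence gives
  \<open>|w\<^sub>j - \<beta>\<^sub>j| \<le> \<mu> \<parallel>\<beta>\<parallel>\<^sub>1 + \<tau> \<le> \<mu> \<surd>k \<parallel>\<beta>\<parallel>\<^sub>2 + \<tau>\<close>, and the hypothesis on \<open>\<beta>\<^sub>m\<^sub>i\<^sub>n\<close> makes
  every \<open>|w\<^sub>i|\<close> with \<open>i \<in> S\<close> strictly larger than every \<open>|w\<^sub>j|\<close> with \<open>j \<notin> S\<close>. Hence any set of
  the \<open>d\<close> largest entries contains \<open>S\<close> as soon as \<open>d \<ge> k\<close>, and the threshold on \<open>d\<close> is
  at least \<open>k\<close> because \<open>\<surd>k \<beta>\<^sub>m\<^sub>i\<^sub>n \<le> \<parallel>\<beta>\<parallel>\<^sub>2\<close>.\<close>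

lemma emeasure_normal_density_atLeast_le:
  fixes \<sigma> t :: real
  assumes s: "\<sigma> > 0" and t: "t > 0"
  shows "emeasure (density lborel (normal_density 0 \<sigma>)) {t..}
           \<le> ennreal (\<sigma>\<^sup>2 / t * normal_density 0 \<sigma> t)"
proof -
  let ?\<phi> = "normal_density 0 \<sigma>"
  txt \<open>On \<open>[t, \<infinity>)\<close> the density is at most \<open>x \<phi>(x) / t\<close>, an exact derivative.\<close>
  define F where "F x = - (\<sigma>\<^sup>2 / t) * ?\<phi> x" for x
  have F_deriv: "DERIV F x :> x * ?\<phi> x / t" for x
  proof -
    have "DERIV F x :> - (\<sigma>\<^sup>2 / t) * (1 / sqrt (2 * pi * \<sigma>\<^sup>2) *
        (exp (-(x - 0)\<^sup>2 / (2 * \<sigma>\<^sup>2)) * (- (2 * (x - 0)) / (2 * \<sigma>\<^sup>2))))"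
      unfolding F_def normal_density_def using s t by (auto intro!: derivative_eq_intros)
    also have "- (\<sigma>\<^sup>2 / t) * (1 / sqrt (2 * pi * \<sigma>\<^sup>2) *
        (exp (-(x - 0)\<^sup>2 / (2 * \<sigma>\<^sup>2)) * (- (2 * (x - 0)) / (2 * \<sigma>\<^sup>2)))) = x * ?\<phi> x / t"
      using s by (simp add: normal_density_def field_simps power2_eq_square)
    finally show ?thesis .
  qed
  have "filterlim (\<lambda>x::real. - (x\<^sup>2) / (2 * \<sigma>\<^sup>2)) at_bot at_top"
    using s by real_asymp
  then have "((\<lambda>x. exp (- (x\<^sup>2) / (2 * \<sigma>\<^sup>2))) \<longlongrightarrow> 0) at_top"
    by (rule filterlim_compose[OF exp_at_bot])
  then have "((\<lambda>x. (- (\<sigma>\<^sup>2 / t) * (1 / sqrt (2 * pi * \<sigma>\<^sup>2))) * exp (- (x\<^sup>2) / (2 * \<sigma>\<^sup>2)))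
      \<longlongrightarrow> 0) at_top"
    by (rule tendsto_mult_right_zero)
  then have F_lim: "(F \<longlongrightarrow> 0) at_top"
    unfolding F_def normal_density_def by (simp add: mult.assoc)
  have "emeasure (density lborel ?\<phi>) {t..} = (\<integral>\<^sup>+x. ennreal (?\<phi> x) * indicator {t..} x \<partial>lborel)"
    by (simp add: emeasure_density)
  also have "\<dots> \<le> (\<integral>\<^sup>+x. ennreal (x * ?\<phi> x / t) * indicator {t..} x \<partial>lborel)"
  proof (intro nn_integral_mono)
    fix x :: real
    have "?\<phi> x \<le> x * ?\<phi> x / t" if "t \<le> x"
      using that t by (simp add: field_simps mult_right_mono)
    then show "ennreal (?\<phi> x) * indicator {t..} x \<le> ennreal (x * ?\<phi> x / t) * indicator {t..} x"
      by (simp add: indicator_def ennreal_leI)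
  qed
  also have "\<dots> = ennreal (0 - F t)"
    by (rule nn_integral_FTC_atLeast[OF _ F_deriv _ F_lim])
      (use t in \<open>auto simp: normal_density_def\<close>)
  also have "0 - F t = \<sigma>\<^sup>2 / t * ?\<phi> t" by (simp add: F_def)
  finally show ?thesis .
qed

lemma measure_normal_upper_tail_le:
  assumes D: "distributed M lborel W (normal_density 0 \<sigma>)" and s: "\<sigma> > 0" and t: "t > 0"
  shows "measure M {x \<in> space M. t \<le> W x} \<le> \<sigma>\<^sup>2 / t * normal_density 0 \<sigma> t"
proof -
  have "measure M {x \<in> space M. t \<le> W x} = measure (distr M lborel W) {t..}"
    using D by (subst measure_distr) (auto simp: distributed_def intro!: arg_cong[where f="measure M"])
  also have "\<dots> = measure (density lborel (normal_density 0 \<sigma>)) {t..}"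
    using D by (simp add: distributed_def)
  also have "\<dots> \<le> \<sigma>\<^sup>2 / t * normal_density 0 \<sigma> t"
    using emeasure_normal_density_atLeast_le[OF s t] t by (simp add: measure_def enn2real_leI)
  finally show ?thesis .
qed

lemma (in prob_space) prob_normal_abs_gt_le:
  assumes D: "distributed M lborel W (normal_density 0 \<sigma>)" and s: "\<sigma> > 0" and t: "t > 0"
  shows "prob {x \<in> space M. t < \<bar>W x\<bar>} \<le> 2 * (\<sigma>\<^sup>2 / t * normal_density 0 \<sigma> t)"
proof -
  have "distributed M lborel (\<lambda>x. 0 + (-1) * W x) (normal_density (0 + (-1) * 0) (\<bar>-1\<bar> * \<sigma>))"
    by (rule normal_density_affine[OF D s]) simp
  then have D_neg: "distributed M lborel (\<lambda>x. - W x) (normal_density 0 \<sigma>)" by simp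
  have [measurable]: "W \<in> borel_measurable M" using D by (simp add: distributed_def)
  have "prob {x \<in> space M. t < \<bar>W x\<bar>}
      \<le> prob ({x \<in> space M. t \<le> W x} \<union> {x \<in> space M. t \<le> - W x})"
    by (rule finite_measure_mono) auto
  also have "\<dots> \<le> prob {x \<in> space M. t \<le> W x} + prob {x \<in> space M. t \<le> - W x}"
    by (rule measure_Un_le) auto
  also have "\<dots> \<le> 2 * (\<sigma>\<^sup>2 / t * normal_density 0 \<sigma> t)"
    using measure_normal_upper_tail_le[OF D s t] measure_normal_upper_tail_le[OF D_neg s t] by simp
  finally show ?thesis .
qed

lemma prob_space_gauss_noise: "\<sigma> > 0 \<Longrightarrow> prob_space (gauss_noise n \<sigma>)"
  unfolding gauss_noise_def by (auto intro: prob_space_PiM prob_space_normal_density)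

lemma distr_gauss_noise_component:
  assumes "\<sigma> > 0" and "i < n"
  shows "distr (gauss_noise n \<sigma>) borel (\<lambda>\<eta>. \<eta> i) = density lborel (normal_density 0 \<sigma>)"
proof -
  have "distr (gauss_noise n \<sigma>) borel (\<lambda>\<eta>. \<eta> i)
      = distr (gauss_noise n \<sigma>) (density lborel (normal_density 0 \<sigma>)) (\<lambda>\<eta>. \<eta> i)"
    by (rule distr_cong) simp_all
  also have "\<dots> = density lborel (normal_density 0 \<sigma>)"
    unfolding gauss_noise_def
    by (rule distr_PiM_component) (use assms prob_space_normal_density in auto)
  finally show ?thesis .
qed

lemma measurable_gauss_noise_component:
  "i < n \<Longrightarrow> (\<lambda>\<eta>. \<eta> i) \<in> borel_measurable (gauss_noise n \<sigma>)"
  unfolding gauss_noise_def by measurable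

lemma distributed_gauss_noise_component:
  assumes "\<sigma> > 0" and "i < n"
  shows "distributed (gauss_noise n \<sigma>) lborel (\<lambda>\<eta>. \<eta> i) (normal_density 0 \<sigma>)"
proof -
  have "distr (gauss_noise n \<sigma>) lborel (\<lambda>\<eta>. \<eta> i) = distr (gauss_noise n \<sigma>) borel (\<lambda>\<eta>. \<eta> i)"
    by (rule distr_cong) simp_all
  then show ?thesis
    using distr_gauss_noise_component[OF assms] measurable_gauss_noise_component[OF assms(2)]
    by (simp add: distributed_def)
qed

lemma indep_vars_gauss_noise_components:
  assumes s: "\<sigma> > 0" and n: "n \<noteq> 0"
  shows "prob_space.indep_vars (gauss_noise n \<sigma>) (\<lambda>_. borel) (\<lambda>i \<eta>. \<eta> i) {..<n}"
proof -
  let ?M = "gauss_noise n \<sigma>"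
  interpret prob_space ?M by (rule prob_space_gauss_noise[OF s])
  have "distr ?M (Pi\<^sub>M {..<n} (\<lambda>_. borel)) (\<lambda>\<eta>. restrict \<eta> {..<n}) = distr ?M ?M (\<lambda>\<eta>. \<eta>)"
    by (rule distr_cong) (auto simp: gauss_noise_def intro!: sets_PiM_cong simp: space_PiM)
  also have "\<dots> = ?M" by (rule distr_id)
  also have "\<dots> = (Pi\<^sub>M {..<n} (\<lambda>i. distr ?M borel (\<lambda>\<eta>. \<eta> i)))"
    unfolding gauss_noise_def
    by (rule PiM_cong) (simp_all add: distr_gauss_noise_component[OF s, unfolded gauss_noise_def])
  finally show ?thesis
    using n measurable_gauss_noise_component by (subst indep_vars_iff_distr_eq_PiM') auto
qed

lemma distributed_gauss_noise_unit_combination: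
  fixes c :: "nat \<Rightarrow> real"
  assumes s: "\<sigma> > 0" and c: "(\<Sum>i<n. (c i)\<^sup>2) = 1"
  shows "distributed (gauss_noise n \<sigma>) lborel (\<lambda>\<eta>. \<Sum>i<n. c i * \<eta> i) (normal_density 0 \<sigma>)"
proof -
  let ?M = "gauss_noise n \<sigma>"
  interpret prob_space ?M by (rule prob_space_gauss_noise[OF s])
  txt \<open>Only the coordinates with \<open>c i \<noteq> 0\<close> enter, so that every summand has a proper normal law.\<close>
  define J where "J = {i. i < n \<and> c i \<noteq> 0}"
  have sum_J: "(\<Sum>i\<in>J. f i) = (\<Sum>i<n. f i)" if "\<And>i. c i = 0 \<Longrightarrow> f i = 0" for f :: "nat \<Rightarrow> real"
    by (rule sum.mono_neutral_left) (auto simp: J_def that)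
  have "J \<noteq> {}"
    using c sum_J[of "\<lambda>i. (c i)\<^sup>2"] by auto
  then have "n \<noteq> 0" by (auto simp: J_def)
  have indep_J: "indep_vars (\<lambda>_. borel) (\<lambda>i \<eta>. c i * \<eta> i) J"
    by (rule indep_vars_compose2[where X="\<lambda>i \<eta>. \<eta> i",
          OF indep_vars_subset[OF indep_vars_gauss_noise_components[OF s \<open>n \<noteq> 0\<close>]]])
      (auto simp: J_def)
  have "distributed ?M lborel (\<lambda>\<eta>. c i * \<eta> i) (normal_density 0 (\<bar>c i\<bar> * \<sigma>))" if "i \<in> J" for i
    using normal_density_affine[OF distributed_gauss_noise_component[OF s] s, where \<beta>=0] that
    by (simp add: J_def)
  then have "distributed ?M lborel (\<lambda>\<eta>. \<Sum>i\<in>J. c i * \<eta> i)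
      (normal_density (\<Sum>i\<in>J. 0) (sqrt (\<Sum>i\<in>J. (\<bar>c i\<bar> * \<sigma>)\<^sup>2)))"
    by (intro sum_indep_normal[OF _ \<open>J \<noteq> {}\<close> indep_J]) (use s in \<open>auto simp: J_def\<close>)
  moreover have "(\<Sum>i\<in>J. (\<bar>c i\<bar> * \<sigma>)\<^sup>2) = \<sigma>\<^sup>2"
    using c by (simp add: sum_J power_mult_distrib flip: sum_distrib_right)
  moreover have "(\<lambda>\<eta>. \<Sum>i\<in>J. c i * \<eta> i) = (\<lambda>\<eta>. \<Sum>i<n. c i * \<eta> i)"
    by (simp add: sum_J)
  ultimately show ?thesis using s by simp
qed

lemma prob_gauss_noise_correlations_bounded_ge:
  assumes s: "\<sigma> > 0" and \<tau>: "\<tau> > 0" and unit: "\<forall>j<p. (\<Sum>i<n. (X i j)\<^sup>2) = 1"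
  shows "1 - real p * (2 * (\<sigma>\<^sup>2 / \<tau> * normal_density 0 \<sigma> \<tau>))
    \<le> measure (gauss_noise n \<sigma>) {\<eta> \<in> space (gauss_noise n \<sigma>). \<forall>j<p. \<bar>tmatvec n X \<eta> j\<bar> \<le> \<tau>}"
proof -
  let ?M = "gauss_noise n \<sigma>" and ?c = "2 * (\<sigma>\<^sup>2 / \<tau> * normal_density 0 \<sigma> \<tau>)"
  interpret prob_space ?M by (rule prob_space_gauss_noise[OF s])
  define Bad where "Bad j = {\<eta> \<in> space ?M. \<tau> < \<bar>tmatvec n X \<eta> j\<bar>}" for j
  have Bad_sets: "Bad j \<in> sets ?M" for j
    unfolding Bad_def tmatvec_def gauss_noise_def by measurable
  have "prob (Bad j) \<le> ?c" if "j < p" for j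
    unfolding Bad_def tmatvec_def
    by (intro prob_normal_abs_gt_le[OF _ s \<tau>] distributed_gauss_noise_unit_combination[OF s])
      (use unit that in auto)
  then have "(\<Sum>j<p. prob (Bad j)) \<le> real p * ?c"
    using sum_mono[of "{..<p}" "\<lambda>j. prob (Bad j)" "\<lambda>_. ?c"] by simp
  moreover have "prob (\<Union>j<p. Bad j) \<le> (\<Sum>j<p. prob (Bad j))"
    by (rule finite_measure_subadditive_finite) (use Bad_sets in auto)
  moreover have "prob (space ?M - (\<Union>j<p. Bad j)) = 1 - prob (\<Union>j<p. Bad j)"
    by (rule prob_compl) (use Bad_sets in auto)
  moreover have "{\<eta> \<in> space ?M. \<forall>j<p. \<bar>tmatvec n X \<eta> j\<bar> \<le> \<tau>} = space ?M - (\<Union>j<p. Bad j)"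
    by (auto simp: Bad_def not_less)
  ultimately show ?thesis by simp
qed

lemma col_inner_abs_le_coherence:
  assumes "a < p" "b < p" "a \<noteq> b"
  shows "\<bar>col_inner n X a b\<bar> \<le> coherence n p X"
proof -
  have "finite {\<bar>col_inner n X a b\<bar> | a b. a < p \<and> b < p \<and> a \<noteq> b}"
    by (rule finite_subset[of _ "(\<lambda>(a, b). \<bar>col_inner n X a b\<bar>) ` ({..<p} \<times> {..<p})"]) auto
  then show ?thesis
    unfolding coherence_def by (rule Max_ge) (use assms in blast)
qed

lemma tmatvec_matvec_add:
  "tmatvec n X (\<lambda>i. matvec p X \<beta> i + \<eta> i) j
     = (\<Sum>l<p. col_inner n X j l * \<beta> l) + tmatvec n X \<eta> j"
proof -
  have "tmatvec n X (\<lambda>i. matvec p X \<beta> i + \<eta> i) j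
      = (\<Sum>i<n. \<Sum>l<p. X i j * X i l * \<beta> l) + tmatvec n X \<eta> j"
    by (simp add: tmatvec_def matvec_def distrib_left sum.distrib sum_distrib_left mult.assoc)
  also have "(\<Sum>i<n. \<Sum>l<p. X i j * X i l * \<beta> l) = (\<Sum>l<p. col_inner n X j l * \<beta> l)"
    by (subst sum.swap) (simp add: col_inner_def sum_distrib_right)
  finally show ?thesis .
qed

lemma gram_row_sum_deviation_le:
  assumes j: "j < p" and unit: "(\<Sum>i<n. (X i j)\<^sup>2) = 1" and \<mu>: "\<mu> \<ge> 0"
    and coh: "\<And>l. l < p \<Longrightarrow> l \<noteq> j \<Longrightarrow> \<bar>col_inner n X j l\<bar> \<le> \<mu>"
  shows "\<bar>(\<Sum>l<p. col_inner n X j l * \<beta> l) - \<beta> j\<bar> \<le> \<mu> * (\<Sum>l<p. \<bar>\<beta> l\<bar>)"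
proof -
  have "col_inner n X j j = 1" using unit by (simp add: col_inner_def power2_eq_square)
  then have "(\<Sum>l<p. col_inner n X j l * \<beta> l) - \<beta> j
      = (\<Sum>l\<in>{..<p} - {j}. col_inner n X j l * \<beta> l)"
    using j by (simp add: sum.remove)
  also have "\<bar>\<dots>\<bar> \<le> (\<Sum>l\<in>{..<p} - {j}. \<bar>col_inner n X j l * \<beta> l\<bar>)"
    by (rule sum_abs)
  also have "\<dots> \<le> (\<Sum>l\<in>{..<p} - {j}. \<mu> * \<bar>\<beta> l\<bar>)"
    using coh by (intro sum_mono) (auto simp: abs_mult intro!: mult_right_mono)
  also have "\<dots> \<le> (\<Sum>l<p. \<mu> * \<bar>\<beta> l\<bar>)"
    using \<mu> by (intro sum_mono2) auto
  finally show ?thesis by (simp add: sum_distrib_left)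
qed

lemma abs_perturbed_less:
  fixes a b x e f B \<tau> :: real
  assumes "\<bar>b\<bar> \<le> B" "\<bar>a - x\<bar> \<le> B" "\<bar>f\<bar> \<le> \<tau>" "\<bar>e\<bar> \<le> \<tau>" "2 * B + 2 * \<tau> < \<bar>x\<bar>"
  shows "\<bar>b + f\<bar> < \<bar>a + e\<bar>"
  using assms by linarith

lemma correlation_separates_support:
  assumes unit: "\<forall>j<p. (\<Sum>i<n. (X i j)\<^sup>2) = 1" and \<mu>: "\<mu> \<ge> 0"
    and coh: "\<And>a b. a < p \<Longrightarrow> b < p \<Longrightarrow> a \<noteq> b \<Longrightarrow> \<bar>col_inner n X a b\<bar> \<le> \<mu>"
    and supp: "S = {j. j < p \<and> \<beta> j \<noteq> 0}"
    and noise: "\<forall>j<p. \<bar>tmatvec n X \<eta> j\<bar> \<le> \<tau>"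
    and margin: "\<And>i. i \<in> S \<Longrightarrow> 2 * \<mu> * (\<Sum>l<p. \<bar>\<beta> l\<bar>) + 2 * \<tau> < \<bar>\<beta> i\<bar>"
    and i: "i \<in> S" and j: "j < p" "j \<notin> S"
  shows "\<bar>tmatvec n X (\<lambda>i. matvec p X \<beta> i + \<eta> i) j\<bar>
       < \<bar>tmatvec n X (\<lambda>i. matvec p X \<beta> i + \<eta> i) i\<bar>"
proof -
  let ?B = "\<mu> * (\<Sum>l<p. \<bar>\<beta> l\<bar>)"
  have "i < p" using i supp by auto
  have dev: "\<bar>(\<Sum>l<p. col_inner n X q l * \<beta> l) - \<beta> q\<bar> \<le> ?B" if "q < p" for q
    using that unit \<mu> coh by (intro gram_row_sum_deviation_le) auto
  have "\<beta> j = 0" using j supp by auto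
  then have signal_j: "\<bar>\<Sum>l<p. col_inner n X j l * \<beta> l\<bar> \<le> ?B"
    using dev[OF \<open>j < p\<close>] by simp
  have gap: "2 * ?B + 2 * \<tau> < \<bar>\<beta> i\<bar>"
    using margin[OF i] by (simp add: mult.assoc)
  show ?thesis
    unfolding tmatvec_matvec_add
    by (rule abs_perturbed_less[OF signal_j dev[OF \<open>i < p\<close>]
          noise[rule_format, OF \<open>j < p\<close>] noise[rule_format, OF \<open>i < p\<close>] gap])
qed

lemma strictly_dominant_subset_top_set:
  fixes w :: "nat \<Rightarrow> real"
  assumes dom: "\<And>i j. i \<in> S \<Longrightarrow> j < p \<Longrightarrow> j \<notin> S \<Longrightarrow> \<bar>w j\<bar> < \<bar>w i\<bar>"
    and S: "S \<subseteq> {..<p}" and T: "T \<subseteq> {..<p}" and card: "card S \<le> card T"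
    and top: "\<forall>i\<in>T. \<forall>j\<in>{..<p} - T. \<bar>w j\<bar> \<le> \<bar>w i\<bar>"
  shows "S \<subseteq> T"
proof
  fix i assume "i \<in> S"
  show "i \<in> T"
  proof (rule ccontr)
    assume "i \<notin> T"
    txt \<open>Then every element of \<open>T\<close> beats \<open>i\<close>, so lies in \<open>S\<close>, leaving no room in \<open>T\<close>.\<close>
    have "T \<subseteq> S - {i}"
    proof
      fix l assume "l \<in> T"
      then have "l < p" using T by auto
      have "\<bar>w i\<bar> \<le> \<bar>w l\<bar>" using top \<open>l \<in> T\<close> \<open>i \<notin> T\<close> \<open>i \<in> S\<close> S by auto
      then have "l \<in> S" using dom[OF \<open>i \<in> S\<close> \<open>l < p\<close>] by (meson leD)
      with \<open>l \<in> T\<close> \<open>i \<notin> T\<close> show "l \<in> S - {i}" by auto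
    qed
    have "finite S" using S finite_subset by blast
    have "card T \<le> card (S - {i})" using \<open>T \<subseteq> S - {i}\<close> \<open>finite S\<close> by (intro card_mono) auto
    also have "\<dots> < card S" using \<open>finite S\<close> \<open>i \<in> S\<close> by (rule card_Diff1_less)
    finally show False using card by simp
  qed
qed

lemma alg1_output_contains_support:
  assumes unit: "\<forall>j<p. (\<Sum>i<n. (X i j)\<^sup>2) = 1" and \<mu>: "\<mu> \<ge> 0"
    and coh: "\<And>a b. a < p \<Longrightarrow> b < p \<Longrightarrow> a \<noteq> b \<Longrightarrow> \<bar>col_inner n X a b\<bar> \<le> \<mu>"
    and supp: "S = {j. j < p \<and> \<beta> j \<noteq> 0}"
    and noise: "\<forall>j<p. \<bar>tmatvec n X \<eta> j\<bar> \<le> \<tau>"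
    and margin: "\<And>i. i \<in> S \<Longrightarrow> 2 * \<mu> * (\<Sum>l<p. \<bar>\<beta> l\<bar>) + 2 * \<tau> < \<bar>\<beta> i\<bar>"
    and d: "card S \<le> d" and out: "alg1_output n p X (\<lambda>i. matvec p X \<beta> i + \<eta> i) d Shat"
  shows "S \<subseteq> Shat"
proof (rule strictly_dominant_subset_top_set)
  show "\<bar>tmatvec n X (\<lambda>i. matvec p X \<beta> i + \<eta> i) j\<bar>
      < \<bar>tmatvec n X (\<lambda>i. matvec p X \<beta> i + \<eta> i) i\<bar>" if "i \<in> S" "j < p" "j \<notin> S" for i j
    by (rule correlation_separates_support[OF unit \<mu> coh supp noise margin that])
  show "S \<subseteq> {..<p}" using supp by auto
  show "Shat \<subseteq> {..<p}" "card S \<le> card Shat"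
    "\<forall>i\<in>Shat. \<forall>j\<in>{..<p} - Shat. \<bar>tmatvec n X (\<lambda>i. matvec p X \<beta> i + \<eta> i) j\<bar>
        \<le> \<bar>tmatvec n X (\<lambda>i. matvec p X \<beta> i + \<eta> i) i\<bar>"
    using out d by (simp_all add: alg1_output_def Let_def)
qed

lemma alg1_success_event_sets:
  fixes y :: "'a \<Rightarrow> nat \<Rightarrow> real"
  assumes w_meas: "\<And>j. (\<lambda>x. tmatvec n X (y x) j) \<in> borel_measurable M"
  shows "{x \<in> space M. \<forall>d Shat. d \<le> p \<and> c \<le> int d \<and> alg1_output n p X (y x) d Shat
           \<longrightarrow> S \<subseteq> Shat} \<in> sets M"
proof -
  note w_meas[measurable]
  txt \<open>A valid output is a subset of \<open>{..<p}\<close> of size \<open>d\<close>, so the quantifier ranges over a finite set.\<close>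
  have "{x \<in> space M. \<forall>d Shat. d \<le> p \<and> c \<le> int d \<and> alg1_output n p X (y x) d Shat \<longrightarrow> S \<subseteq> Shat}
      = {x \<in> space M. \<forall>T\<in>Pow {..<p}. card T \<le> p \<and> c \<le> int (card T) \<and>
          (\<forall>i\<in>T. \<forall>j\<in>{..<p} - T. \<bar>tmatvec n X (y x) j\<bar> \<le> \<bar>tmatvec n X (y x) i\<bar>)
          \<longrightarrow> S \<subseteq> T}"
    unfolding alg1_output_def Let_def by blast
  also have "\<dots> \<in> sets M"
  proof (rule sets.sets_Collect_finite_All)
    fix T assume "T \<in> Pow {..<p}"
    then have "finite T" by (auto intro: finite_subset)
    then show "{x \<in> space M. card T \<le> p \<and> c \<le> int (card T) \<and>
        (\<forall>i\<in>T. \<forall>j\<in>{..<p} - T. \<bar>tmatvec n X (y x) j\<bar> \<le> \<bar>tmatvec n X (y x) i\<bar>)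
        \<longrightarrow> S \<subseteq> T} \<in> sets M"
      by measurable
  qed simp
  finally show ?thesis .
qed

lemma measure_alg1_success_ge:
  assumes s: "\<sigma> > 0" and \<tau>: "\<tau> > 0" and unit: "\<forall>j<p. (\<Sum>i<n. (X i j)\<^sup>2) = 1"
    and \<mu>: "\<mu> \<ge> 0"
    and coh: "\<And>a b. a < p \<Longrightarrow> b < p \<Longrightarrow> a \<noteq> b \<Longrightarrow> \<bar>col_inner n X a b\<bar> \<le> \<mu>"
    and supp: "S = {j. j < p \<and> \<beta> j \<noteq> 0}"
    and margin: "\<And>i. i \<in> S \<Longrightarrow> 2 * \<mu> * (\<Sum>l<p. \<bar>\<beta> l\<bar>) + 2 * \<tau> < \<bar>\<beta> i\<bar>"
    and c: "\<And>d. c \<le> int d \<Longrightarrow> card S \<le> d"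
  shows "1 - real p * (2 * (\<sigma>\<^sup>2 / \<tau> * normal_density 0 \<sigma> \<tau>))
    \<le> measure (gauss_noise n \<sigma>) {\<eta> \<in> space (gauss_noise n \<sigma>). \<forall>d Shat. d \<le> p \<and> c \<le> int d \<and>
          alg1_output n p X (\<lambda>i. matvec p X \<beta> i + \<eta> i) d Shat \<longrightarrow> S \<subseteq> Shat}"
    (is "_ \<le> measure ?M ?success")
proof -
  interpret prob_space ?M by (rule prob_space_gauss_noise[OF s])
  have "{\<eta> \<in> space ?M. \<forall>j<p. \<bar>tmatvec n X \<eta> j\<bar> \<le> \<tau>} \<subseteq> ?success"
    using alg1_output_contains_support[OF unit \<mu> coh supp _ margin c] by blast
  moreover have "?success \<in> events"
    by (rule alg1_success_event_sets) (unfold tmatvec_def matvec_def gauss_noise_def, measurable)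
  ultimately show ?thesis
    using prob_gauss_noise_correlations_bounded_ge[OF s \<tau> unit] finite_measure_mono by (meson order_trans)
qed

lemma sum_abs_le_sqrt_card_mul_l2norm:
  assumes S: "S \<subseteq> {..<p}" and zero: "\<And>j. j < p \<Longrightarrow> j \<notin> S \<Longrightarrow> \<beta> j = 0"
  shows "(\<Sum>j<p. \<bar>\<beta> j\<bar>) \<le> sqrt (real (card S)) * l2norm p \<beta>"
proof -
  have sum_S: "(\<Sum>j<p. g (\<beta> j)) = (\<Sum>j\<in>S. g (\<beta> j))" if "g 0 = 0" for g :: "real \<Rightarrow> real"
    by (rule sum.mono_neutral_right) (use S zero that in auto)
  have "(\<Sum>j\<in>S. \<bar>\<beta> j\<bar>)\<^sup>2 \<le> (\<Sum>j\<in>S. \<bar>\<beta> j\<bar>\<^sup>2) * real (card S)"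
    by (rule sum_squared_le_sum_of_squares)
  also have "\<dots> = (sqrt (real (card S)) * l2norm p \<beta>)\<^sup>2"
    using sum_S[of "\<lambda>x. x\<^sup>2"] by (simp add: l2norm_def power_mult_distrib sum_nonneg)
  finally have "(\<Sum>j\<in>S. \<bar>\<beta> j\<bar>) \<le> sqrt (real (card S)) * l2norm p \<beta>"
    by (rule power2_le_imp_le) (simp add: l2norm_def sum_nonneg)
  then show ?thesis using sum_S[of abs] by simp
qed

lemma sqrt_card_mul_Min_abs_le_l2norm:
  assumes S: "S \<subseteq> {..<p}" and "S \<noteq> {}"
  shows "sqrt (real (card S)) * Min ((\<lambda>j. \<bar>\<beta> j\<bar>) ` S) \<le> l2norm p \<beta>"
proof -
  let ?m = "Min ((\<lambda>j. \<bar>\<beta> j\<bar>) ` S)"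
  have "finite S" using S finite_subset by blast
  have "?m \<in> (\<lambda>j. \<bar>\<beta> j\<bar>) ` S" using \<open>finite S\<close> \<open>S \<noteq> {}\<close> by (intro Min_in) auto
  then have "0 \<le> ?m" by auto
  have "real (card S) * ?m\<^sup>2 = (\<Sum>j\<in>S. ?m\<^sup>2)" by simp
  also have "\<dots> \<le> (\<Sum>j\<in>S. (\<beta> j)\<^sup>2)"
    using \<open>finite S\<close> \<open>0 \<le> ?m\<close> by (intro sum_mono) (metis Min_le abs_ge_zero finite_imageI
        image_eqI power2_abs power_mono)
  also have "\<dots> \<le> (\<Sum>j<p. (\<beta> j)\<^sup>2)" using S by (intro sum_mono2) auto
  finally have "(sqrt (real (card S)) * ?m)\<^sup>2 \<le> (l2norm p \<beta>)\<^sup>2"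
    by (simp add: l2norm_def power_mult_distrib sum_nonneg)
  then show ?thesis by (rule power2_le_imp_le) (simp add: l2norm_def sum_nonneg)
qed

lemma le_ceiling_sqrt_div_margin:
  fixes b L \<mu> t :: real
  assumes L: "0 < L" and \<mu>: "0 \<le> \<mu>" and t: "0 \<le> t" and bL: "sqrt (real k) * b \<le> L"
    and margin: "2 * \<mu> * sqrt (real k) + t / L < b / L"
  shows "int k \<le> \<lceil>sqrt (real k) / (b / L - 2 * \<mu> * sqrt (real k) - t / L)\<rceil>"
proof -
  define \<delta> where "\<delta> = b / L - 2 * \<mu> * sqrt (real k) - t / L"
  have "0 \<le> t / L" "0 \<le> 2 * \<mu> * sqrt (real k)" using t L \<mu> by simp_all
  then have "0 < \<delta>" "\<delta> \<le> b / L" using margin by (simp_all add: \<delta>_def)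
  then have "0 < b / L" by linarith
  then have "0 < b" using L by (simp add: zero_less_divide_iff)
  have "real k = sqrt (real k) * sqrt (real k)" by simp
  also have "\<dots> \<le> sqrt (real k) * (L / b)"
    using bL \<open>0 < b\<close> by (intro mult_left_mono) (simp_all add: field_simps)
  also have "\<dots> = sqrt (real k) / (b / L)" by simp
  also have "\<dots> \<le> sqrt (real k) / \<delta>"
    using \<open>0 < \<delta>\<close> \<open>\<delta> \<le> b / L\<close> \<open>0 < b / L\<close> by (intro divide_left_mono mult_pos_pos) auto
  also have "\<dots> \<le> of_int \<lceil>sqrt (real k) / \<delta>\<rceil>" by (rule le_of_int_ceiling)
  finally show ?thesis unfolding \<delta>_def by linarith
qed

lemma normal_tail_union_bound_at_threshold:
  assumes s: "\<sigma> > 0" and p: "1 < real p" and \<tau>: "\<tau> = 2 * sqrt (\<sigma>\<^sup>2 * ln (real p))"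
  shows "real p * (2 * (\<sigma>\<^sup>2 / \<tau> * normal_density 0 \<sigma> \<tau>))
       = 1 / (real p * sqrt (2 * pi * ln (real p)))"
proof -
  define r where "r = sqrt (ln (real p))"
  have "0 < ln (real p)" using p by simp
  then have "0 < r" "r\<^sup>2 = ln (real p)" by (simp_all add: r_def)
  have \<tau>_eq: "\<tau> = 2 * \<sigma> * r" using s by (simp add: \<tau> r_def real_sqrt_mult)
  have "exp (- (\<tau> - 0)\<^sup>2 / (2 * \<sigma>\<^sup>2)) = exp (- ln (real p * real p))"
    using \<open>r\<^sup>2 = ln (real p)\<close> s p by (simp add: \<tau>_eq field_simps power_mult_distrib ln_mult)
  also have "\<dots> = 1 / (real p * real p)"
    by (subst exp_minus, subst exp_ln) (use p in \<open>simp_all add: inverse_eq_divide\<close>)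
  finally have "normal_density 0 \<sigma> \<tau> = 1 / (sqrt (2 * pi) * \<sigma>) * (1 / (real p * real p))"
    using s by (simp add: normal_density_def real_sqrt_mult)
  moreover have "sqrt (2 * pi * ln (real p)) = sqrt (2 * pi) * r" by (simp add: r_def real_sqrt_mult)
  ultimately show ?thesis
    using s p \<open>0 < r\<close> by (simp add: \<tau>_eq field_simps power2_eq_square)
qed

theorem theorem3:
  fixes n p k :: nat and X :: "nat \<Rightarrow> nat \<Rightarrow> real" and \<beta> :: "nat \<Rightarrow> real"
    and \<sigma> :: real and S :: "nat set"
  assumes p2: "p \<ge> 2" and kn: "k < n" and sigma_pos: "\<sigma> > 0"
    and unit_cols: "\<forall>j<p. (\<Sum>i<n. (X i j)\<^sup>2) = 1"
    and mu_pos: "coherence n p X > 0"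
    and beta_dom: "\<forall>j. j \<ge> p \<longrightarrow> \<beta> j = 0"
    and S_def: "S = {j. j < p \<and> \<beta> j \<noteq> 0}"
    and card_S: "card S = k"
    and k_mu: "real k < 1 / coherence n p X"
    and beta_min: "Min ((\<lambda>j. \<bar>\<beta> j\<bar>) ` S) / l2norm p \<beta>
        > 2 * coherence n p X * sqrt (real k)
          + 4 * sqrt (\<sigma>\<^sup>2 * ln (real p)) / l2norm p \<beta>"
  shows "measure (gauss_noise n \<sigma>)
      {\<eta> \<in> space (gauss_noise n \<sigma>).
        \<forall>d Shat. d \<le> p \<and>
          int d \<ge> \<lceil>sqrt (real k) /
              (Min ((\<lambda>j. \<bar>\<beta> j\<bar>) ` S) / l2norm p \<beta>
               - 2 * coherence n p X * sqrt (real k)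
               - 4 * sqrt (\<sigma>\<^sup>2 * ln (real p)) / l2norm p \<beta>)\<rceil> \<and>
          alg1_output n p X (\<lambda>i. matvec p X \<beta> i + \<eta> i) d Shat
          \<longrightarrow> S \<subseteq> Shat}
    > 1 - 2 / (real p * sqrt (2 * pi * ln (real p)))"
proof -
  let ?\<mu> = "coherence n p X" and ?L = "l2norm p \<beta>" and ?b = "Min ((\<lambda>j. \<bar>\<beta> j\<bar>) ` S)"
  define \<tau> where "\<tau> = 2 * sqrt (\<sigma>\<^sup>2 * ln (real p))"
  have S: "S \<subseteq> {..<p}" and zero: "\<And>j. j < p \<Longrightarrow> j \<notin> S \<Longrightarrow> \<beta> j = 0" using S_def by auto
  have "0 < \<tau>" using p2 sigma_pos by (simp add: \<tau>_def)
  have "S \<noteq> {}"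
    using beta_min card_S zero by (auto simp: l2norm_def)
  have sqrt_k_b: "sqrt (real k) * ?b \<le> ?L"
    using sqrt_card_mul_Min_abs_le_l2norm[OF S \<open>S \<noteq> {}\<close>] card_S by simp
  have "0 < ?b" using S_def \<open>S \<noteq> {}\<close> finite_subset[OF S] by (subst Min_gr_iff) auto
  moreover have "0 < k" using card_S \<open>S \<noteq> {}\<close> finite_subset[OF S] by auto
  ultimately have "0 < sqrt (real k) * ?b" by simp
  then have "0 < ?L" using sqrt_k_b by linarith
  have "(2 * ?\<mu> * sqrt (real k) + 4 * sqrt (\<sigma>\<^sup>2 * ln (real p)) / ?L) * ?L < ?b / ?L * ?L"
    using beta_min \<open>0 < ?L\<close> by (intro mult_strict_right_mono) auto
  then have b_gap: "2 * ?\<mu> * (sqrt (real k) * ?L) + 2 * \<tau> < ?b"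
    using \<open>0 < ?L\<close> by (simp add: \<tau>_def distrib_right mult.assoc)
  have margin: "2 * ?\<mu> * (\<Sum>l<p. \<bar>\<beta> l\<bar>) + 2 * \<tau> < \<bar>\<beta> i\<bar>" if "i \<in> S" for i
  proof -
    have "2 * ?\<mu> * (\<Sum>l<p. \<bar>\<beta> l\<bar>) \<le> 2 * ?\<mu> * (sqrt (real k) * ?L)"
      using sum_abs_le_sqrt_card_mul_l2norm[OF S zero] card_S mu_pos by (intro mult_left_mono) auto
    moreover have "?b \<le> \<bar>\<beta> i\<bar>"
      using Min_le[OF finite_imageI[OF finite_subset[OF S]] imageI[OF that]] by simp
    ultimately show ?thesis using b_gap by linarith
  qed
  have "int k \<le> \<lceil>sqrt (real k) / (?b / ?L - 2 * ?\<mu> * sqrt (real k)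
      - 4 * sqrt (\<sigma>\<^sup>2 * ln (real p)) / ?L)\<rceil>" (is "_ \<le> ?c")
    by (rule le_ceiling_sqrt_div_margin[OF \<open>0 < ?L\<close> _ _ sqrt_k_b beta_min]) (use mu_pos p2 in auto)
  then have d_large: "card S \<le> d" if "?c \<le> int d" for d
    using that card_S by linarith
  have "real p * (2 * (\<sigma>\<^sup>2 / \<tau> * normal_density 0 \<sigma> \<tau>))
      = 1 / (real p * sqrt (2 * pi * ln (real p)))"
    using normal_tail_union_bound_at_threshold[OF sigma_pos _ \<tau>_def] p2 by simp
  moreover have "1 / (real p * sqrt (2 * pi * ln (real p))) < 2 / (real p * sqrt (2 * pi * ln (real p)))"
    using p2 by (simp add: divide_strict_right_mono)
  ultimately show ?thesis
    using mu_pos d_large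
    by (intro less_le_trans[OF _ measure_alg1_success_ge[OF sigma_pos \<open>0 < \<tau>\<close> unit_cols _
          col_inner_abs_le_coherence S_def margin]]) auto
qed

end
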